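(* Let $\mathcal X,\mathcal U$ be finite nonempty sets, $f:\mathcal X\times\mathcal U\to\mathcal X$ and $\ell,g:\mathcal X\to\mathbb R$, and let $$v_{\mathrm{RAA}}^*(x)=\max_{\mathbf u\in\mathbb U}\min\Big\{\max_{\tau\in\mathbb N}\ell(\xi_x^{\mathbf u}(\tau)),\min_{\kappa\in\mathbb N}g(\xi_x^{\mathbf u}(\kappa))\Big\}.$$ Then there is an augmented policy $\bar\pi\in\overline\Pi$ such that for all $x\in\mathcal X$, $$v_{\mathrm{RAA}}^*(x)=\min\Big\{\max_{\tau\in\mathbb N}\ell(\bar\xi_x^{\bar\pi}(\tau)),\min_{\tau\in\mathbb N}g(\bar\xi_x^{\bar\pi}(\tau))\Big\}.$$
   Context: $\mathbb N=\{0,1,\dots\}$; $\mathbb U$ is the set of sequences $\mathbb N\to\mathcal U$; for $\mathbf u\in\mathbb U$: $\xi_x^{\mathbf u}(0)=x$, $\xi_x^{\mathbf u}(t+1)=f(\xi_x^{\mathbf u}(t),\mathbf u(t))$. Let $\mathcal Y=\{\ell(x):x\in\mathcal X\}$, $\mathcal Z=\{g(x):x\in\mathcal X\}$ and $\overline\Pi$ the set of maps $\bar\pi:\mathcal X\times\mathcal Y\times\mathcal Z\to\mathcal U$. For $\bar\pi\in\overline\Pi$, define $\bar\xi_x^{\bar\pi}(0)=x$, $\bar y_x^{\bar\pi}(0)=\ell(x)$, $\bar z_x^{\bar\pi}(0)=g(x)$, $\bar\xi_x^{\bar\pi}(t+1)=f\big(\bar\xi_x^{\bar\pi}(t),\bar\pi(\bar\xi_x^{\bar\pi}(t),\bar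 y_x^{\bar\pi}(t),\bar z_x^{\bar\pi}(t))\big)$, $\bar y_x^{\bar\pi}(t+1)=\max\{\ell(\bar\xi_x^{\bar\pi}(t+1)),\bar y_x^{\bar\pi}(t)\}$, $\bar z_x^{\bar\pi}(t+1)=\min\{g(\bar\xi_x^{\bar\pi}(t+1)),\bar z_x^{\bar\pi}(t)\}$. *)

theory Defs
  imports "HOL-Analysis.Analysis"
begin

primrec traj :: "('x \<Rightarrow> 'u \<Rightarrow> 'x) \<Rightarrow> 'x \<Rightarrow> (nat \<Rightarrow> 'u) \<Rightarrow> nat \<Rightarrow> 'x" where
  "traj f x u 0 = x"
| "traj f x u (Suc t) = f (traj f x u t) (u t)"

text \<open>Reach-avoid value along a sequence of states: min{ max_tau l, min_kappa g }.
  Suprema/infima are over finitely many values (finite state space) hence attained.\<close>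
definition raa_payoff :: "('x \<Rightarrow> real) \<Rightarrow> ('x \<Rightarrow> real) \<Rightarrow> (nat \<Rightarrow> 'x) \<Rightarrow> real" where
  "raa_payoff l g s = min (SUP tau. l (s tau)) (INF kappa. g (s kappa))"

definition v_RAA :: "('x \<Rightarrow> 'u \<Rightarrow> 'x) \<Rightarrow> ('x \<Rightarrow> real) \<Rightarrow> ('x \<Rightarrow> real) \<Rightarrow> 'x \<Rightarrow> real" where
  "v_RAA f l g x = (SUP u :: nat \<Rightarrow> 'u. raa_payoff l g (traj f x u))"

primrec aug_traj :: "('x \<Rightarrow> 'u \<Rightarrow> 'x) \<Rightarrow> ('x \<Rightarrow> real) \<Rightarrow> ('x \<Rightarrow> real)
    \<Rightarrow> ('x \<Rightarrow> real \<Rightarrow> real \<Rightarrow> 'u) \<Rightarrow> 'x \<Rightarrow> nat \<Rightarrow> 'x \<times> real \<times> real" where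
  "aug_traj f l g pol x 0 = (x, l x, g x)"
| "aug_traj f l g pol x (Suc t) =
     (let (xt, yt, zt) = aug_traj f l g pol x t;
          xn = f xt (pol xt yt zt)
      in (xn, max (l xn) yt, min (g xn) zt))"

definition aug_state :: "('x \<Rightarrow> 'u \<Rightarrow> 'x) \<Rightarrow> ('x \<Rightarrow> real) \<Rightarrow> ('x \<Rightarrow> real)
    \<Rightarrow> ('x \<Rightarrow> real \<Rightarrow> real \<Rightarrow> 'u) \<Rightarrow> 'x \<Rightarrow> nat \<Rightarrow> 'x" where
  "aug_state f l g pol x t = fst (aug_traj f l g pol x t)"

end

theory Submission
  imports Defs
begin

(* Augment the state by the running maximum y of l and the running minimum z of g. The best
   value-to-go aug_value x y z over input sequences is attained, since every payoff lies in the
   finite set {y, z} \<union> range l \<union> range g, and v*_RAA(x) = aug_value x (l x) (g x). The policy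
   plays the first input of an optimal sequence that reaches the level aug_value soonest; mere
   optimality would allow the closed loop to postpone reaching forever. Along the closed loop
   aug_value is invariant, so z never drops below v*_RAA(x), and the reach time strictly decreases
   until y \<ge> v*_RAA(x); hence the closed loop attains the optimal value. *)

lemma SUP_attained_finite_range:
  fixes h :: "'a \<Rightarrow> 'b::conditionally_complete_linorder"
  assumes "finite (range h)"
  obtains a where "(SUP t. h t) = h a"
  using Max_in[OF assms] cSup_eq_Max[OF assms] by auto

lemma INF_attained_finite_range:
  fixes h :: "'a \<Rightarrow> 'b::conditionally_complete_linorder"
  assumes "finite (range h)"
  obtains a where "(INF t. h t) = h a"
  using Min_in[OF assms] cInf_eq_Min[OF assms] by auto

lemma SUP_nat_unfold:
  fixes h :: "nat \<Rightarrow> 'b::conditionally_complete_linorder"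
  assumes "finite (range h)"
  shows "(SUP t. h t) = max (h 0) (SUP t. h (Suc t))"
proof -
  have "bdd_above (h ` range Suc)"
    by (rule bdd_above_mono[OF bdd_above_finite[OF assms]]) auto
  then show ?thesis
    by (subst UNIV_nat_eq) (simp add: cSup_insert sup_max image_image)
qed

lemma INF_nat_unfold:
  fixes h :: "nat \<Rightarrow> 'b::conditionally_complete_linorder"
  assumes "finite (range h)"
  shows "(INF t. h t) = min (h 0) (INF t. h (Suc t))"
proof -
  have "bdd_below (h ` range Suc)"
    by (rule bdd_below_mono[OF bdd_below_finite[OF assms]]) auto
  then show ?thesis
    by (subst UNIV_nat_eq) (simp add: cInf_insert inf_min image_image)
qed

lemma traj_Suc_shift: "traj f x u (Suc t) = traj f (f x (u 0)) (\<lambda>t. u (Suc t)) t"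
  by (induction t) auto

lemma aug_traj_eq:
  "aug_traj f l g pol x t =
     (aug_state f l g pol x t, MAX k\<in>{..t}. l (aug_state f l g pol x k),
      MIN k\<in>{..t}. g (aug_state f l g pol x k))"
proof (induction t)
  case 0
  then show ?case by (simp add: aug_state_def)
next
  case (Suc t)
  obtain xt yt zt where st: "aug_traj f l g pol x t = (xt, yt, zt)"
    by (cases "aug_traj f l g pol x t")
  let ?xn = "f xt (pol xt yt zt)"
  have step: "aug_traj f l g pol x (Suc t) = (?xn, max (l ?xn) yt, min (g ?xn) zt)"
    using st by (simp add: Let_def)
  then have "aug_state f l g pol x (Suc t) = ?xn"
    by (simp add: aug_state_def)
  with step st Suc.IH show ?case
    by (simp add: atMost_Suc)
qed

lemma aug_state_eq_traj:
  "aug_state f l g pol x =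
     traj f x (\<lambda>k. case aug_traj f l g pol x k of (xk, yk, zk) \<Rightarrow> pol xk yk zk)"
proof
  fix t
  show "aug_state f l g pol x t =
     traj f x (\<lambda>k. case aug_traj f l g pol x k of (xk, yk, zk) \<Rightarrow> pol xk yk zk) t"
  proof (induction t)
    case 0
    then show ?case by (simp add: aug_state_def)
  next
    case (Suc t)
    obtain xt yt zt where st: "aug_traj f l g pol x t = (xt, yt, zt)"
      by (cases "aug_traj f l g pol x t")
    then have "aug_state f l g pol x (Suc t) = f xt (pol xt yt zt)"
      by (simp add: aug_state_def Let_def)
    moreover have "aug_state f l g pol x t = xt"
      using st by (simp add: aug_state_def)
    ultimately show ?case
      using Suc.IH st by simp
  qed
qed

lemma finite_range_comp:
  fixes h :: "'x::finite \<Rightarrow> 'a"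
  shows "finite (range (\<lambda>t. h (s t)))"
  by (rule finite_subset[of _ "range h"]) auto

context
  fixes f :: "'x::finite \<Rightarrow> 'u \<Rightarrow> 'x"
    and l g :: "'x \<Rightarrow> real"
begin

(* y and z already account for the current state x, so only its successors enter the payoff. *)
definition tail_payoff :: "'x \<Rightarrow> real \<Rightarrow> real \<Rightarrow> (nat \<Rightarrow> 'u) \<Rightarrow> real" where
  "tail_payoff x y z u =
     min (max y (SUP t. l (traj f x u (Suc t)))) (min z (INF t. g (traj f x u (Suc t))))"

definition aug_value :: "'x \<Rightarrow> real \<Rightarrow> real \<Rightarrow> real" where
  "aug_value x y z = (SUP u. tail_payoff x y z u)"

definition optimal_input :: "'x \<Rightarrow> real \<Rightarrow> real \<Rightarrow> (nat \<Rightarrow> 'u) \<Rightarrow> bool" where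
  "optimal_input x y z u \<longleftrightarrow> tail_payoff x y z u = aug_value x y z"

definition reaches_within :: "real \<Rightarrow> 'x \<Rightarrow> real \<Rightarrow> (nat \<Rightarrow> 'u) \<Rightarrow> nat \<Rightarrow> bool" where
  "reaches_within c x y u n \<longleftrightarrow> c \<le> y \<or> (\<exists>t<n. c \<le> l (traj f x u (Suc t)))"

definition reach_time :: "'x \<Rightarrow> real \<Rightarrow> real \<Rightarrow> nat" where
  "reach_time x y z =
     (LEAST n. \<exists>u. optimal_input x y z u \<and> reaches_within (aug_value x y z) x y u n)"

definition fastest_optimal_input :: "'x \<Rightarrow> real \<Rightarrow> real \<Rightarrow> nat \<Rightarrow> 'u" where
  "fastest_optimal_input x y z =
     (SOME u. optimal_input x y z u \<and> reaches_within (aug_value x y z) x y u (reach_time x y z))"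

definition opt_policy :: "'x \<Rightarrow> real \<Rightarrow> real \<Rightarrow> 'u" where
  "opt_policy x y z = fastest_optimal_input x y z 0"

lemma tail_payoff_mem: "tail_payoff x y z u \<in> insert y (insert z (range l \<union> range g))"
proof -
  obtain a where a: "(SUP t. l (traj f x u (Suc t))) = l (traj f x u (Suc a))"
    using SUP_attained_finite_range[OF finite_range_comp] .
  obtain b where b: "(INF t. g (traj f x u (Suc t))) = g (traj f x u (Suc b))"
    using INF_attained_finite_range[OF finite_range_comp] .
  show ?thesis
    unfolding tail_payoff_def a b by (auto simp: min_def max_def)
qed

lemma finite_range_tail_payoff: "finite (range (tail_payoff x y z))"
  by (rule finite_subset[OF image_subsetI[OF tail_payoff_mem]]) auto

lemma optimal_input_exists: "\<exists>u. optimal_input x y z u"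
  using SUP_attained_finite_range[OF finite_range_tail_payoff]
  unfolding optimal_input_def aug_value_def by metis

lemma tail_payoff_le_aug_value: "tail_payoff x y z u \<le> aug_value x y z"
  unfolding aug_value_def
  by (rule cSUP_upper[OF UNIV_I bdd_above_finite[OF finite_range_tail_payoff]])

lemma aug_value_le_z: "aug_value x y z \<le> z"
proof -
  obtain u where "optimal_input x y z u"
    using optimal_input_exists by blast
  then show ?thesis
    unfolding optimal_input_def tail_payoff_def by linarith
qed

lemma tail_payoff_shift:
  "tail_payoff x y z u =
     tail_payoff (f x (u 0)) (max (l (f x (u 0))) y) (min (g (f x (u 0))) z) (\<lambda>t. u (Suc t))"
proof -
  let ?x1 = "f x (u 0)" and ?u = "\<lambda>t. u (Suc t)"
  have tail: "traj f x u (Suc t) = traj f ?x1 ?u t" for t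
    by (rule traj_Suc_shift)
  have "(SUP t. l (traj f x u (Suc t))) = max (l ?x1) (SUP t. l (traj f ?x1 ?u (Suc t)))"
    unfolding tail by (subst SUP_nat_unfold[OF finite_range_comp]) simp
  moreover have "(INF t. g (traj f x u (Suc t))) = min (g ?x1) (INF t. g (traj f ?x1 ?u (Suc t)))"
    unfolding tail by (subst INF_nat_unfold[OF finite_range_comp]) simp
  ultimately show ?thesis
    unfolding tail_payoff_def by (simp add: ac_simps)
qed

lemma aug_value_step_le:
  "aug_value (f x a) (max (l (f x a)) y) (min (g (f x a)) z) \<le> aug_value x y z"
  unfolding aug_value_def[of "f x a"]
proof (rule cSUP_least)
  fix v
  show "tail_payoff (f x a) (max (l (f x a)) y) (min (g (f x a)) z) v \<le> aug_value x y z"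
    using tail_payoff_shift[of x y z "case_nat a v"] tail_payoff_le_aug_value[of x y z "case_nat a v"]
    by simp
qed simp

lemma reaches_within_shift:
  assumes "reaches_within c x y u n"
  shows "reaches_within c (f x (u 0)) (max (l (f x (u 0))) y) (\<lambda>t. u (Suc t)) (n - 1)"
proof -
  let ?x1 = "f x (u 0)" and ?u = "\<lambda>t. u (Suc t)"
  have "c \<le> max (l ?x1) y \<or> (\<exists>t<n - 1. c \<le> l (traj f ?x1 ?u (Suc t)))"
    if "t < n" "c \<le> l (traj f x u (Suc t))" for t
  proof (cases t)
    case 0
    then have "c \<le> max (l ?x1) y"
      using that by simp
    then show ?thesis ..
  next
    case (Suc t')
    then have "t' < n - 1" "c \<le> l (traj f ?x1 ?u (Suc t'))"
      using that traj_Suc_shift[of f x u "Suc t'"] by simp_all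
    then show ?thesis by blast
  qed
  then show ?thesis
    using assms unfolding reaches_within_def by auto
qed

lemma reach_time_witness:
  "\<exists>u. optimal_input x y z u \<and> reaches_within (aug_value x y z) x y u (reach_time x y z)"
  unfolding reach_time_def
proof (rule LeastI_ex)
  obtain u where u: "optimal_input x y z u"
    using optimal_input_exists by blast
  obtain a where a: "(SUP t. l (traj f x u (Suc t))) = l (traj f x u (Suc a))"
    using SUP_attained_finite_range[OF finite_range_comp] .
  have "aug_value x y z \<le> max y (l (traj f x u (Suc a)))"
    using u a unfolding optimal_input_def tail_payoff_def by linarith
  then have "reaches_within (aug_value x y z) x y u (Suc a)"
    unfolding reaches_within_def by (auto simp: le_max_iff_disj)
  with u show "\<exists>n u. optimal_input x y z u \<and> reaches_within (aug_value x y z) x y u n"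
    by blast
qed

lemma fastest_optimal_input:
  "optimal_input x y z (fastest_optimal_input x y z)"
  "reaches_within (aug_value x y z) x y (fastest_optimal_input x y z) (reach_time x y z)"
  using someI_ex[OF reach_time_witness] unfolding fastest_optimal_input_def by auto

lemma reach_time_zero: "reach_time x y z = 0 \<Longrightarrow> aug_value x y z \<le> y"
  using fastest_optimal_input(2)[of x y z] by (simp add: reaches_within_def)

lemma opt_policy_step:
  fixes x y z
  defines "x1 \<equiv> f x (opt_policy x y z)"
  shows "aug_value x1 (max (l x1) y) (min (g x1) z) = aug_value x y z"
    and "reach_time x1 (max (l x1) y) (min (g x1) z) \<le> reach_time x y z - 1"
proof -
  define u where "u = fastest_optimal_input x y z"
  let ?y1 = "max (l x1) y" and ?z1 = "min (g x1) z" and ?u = "\<lambda>t. u (Suc t)"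
  have x1: "x1 = f x (u 0)"
    unfolding x1_def u_def opt_policy_def ..
  have tail: "tail_payoff x1 ?y1 ?z1 ?u = aug_value x y z"
    using fastest_optimal_input(1)[of x y z] tail_payoff_shift[of x y z u]
    unfolding optimal_input_def x1 u_def by simp
  show preserved: "aug_value x1 ?y1 ?z1 = aug_value x y z"
    using aug_value_step_le[of x "u 0" y z] tail_payoff_le_aug_value[of x1 ?y1 ?z1 ?u] tail
    unfolding x1 by linarith
  have "optimal_input x1 ?y1 ?z1 ?u"
    using tail preserved by (simp add: optimal_input_def)
  moreover have "reaches_within (aug_value x y z) x1 ?y1 ?u (reach_time x y z - 1)"
    using reaches_within_shift[OF fastest_optimal_input(2)] unfolding x1 u_def .
  ultimately show "reach_time x1 ?y1 ?z1 \<le> reach_time x y z - 1"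
    unfolding reach_time_def[of x1] preserved by (blast intro: Least_le)
qed

lemma opt_policy_invariant:
  assumes "aug_traj f l g opt_policy x t = (xt, yt, zt)"
  shows "aug_value xt yt zt = aug_value x (l x) (g x)
    \<and> reach_time xt yt zt \<le> reach_time x (l x) (g x) - t"
  using assms
proof (induction t arbitrary: xt yt zt)
  case 0
  then show ?case by auto
next
  case (Suc t)
  obtain xp yp zp where prev: "aug_traj f l g opt_policy x t = (xp, yp, zp)"
    by (cases "aug_traj f l g opt_policy x t")
  with Suc.prems have "xt = f xp (opt_policy xp yp zp)"
    "yt = max (l xt) yp" "zt = min (g xt) zp"
    by (auto simp: Let_def)
  with opt_policy_step[of xp yp zp] Suc.IH[OF prev] show ?case
    by (simp; linarith)
qed

lemma raa_payoff_traj: "raa_payoff l g (traj f x u) = tail_payoff x (l x) (g x) u"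
  unfolding raa_payoff_def tail_payoff_def
  by (subst SUP_nat_unfold[OF finite_range_comp], subst INF_nat_unfold[OF finite_range_comp])
    (simp add: min.assoc)

lemma v_RAA_eq_aug_value: "v_RAA f l g x = aug_value x (l x) (g x)"
  unfolding v_RAA_def aug_value_def raa_payoff_traj ..

lemma raa_payoff_traj_le_v_RAA: "raa_payoff l g (traj f x u) \<le> v_RAA f l g x"
  unfolding raa_payoff_traj v_RAA_eq_aug_value by (rule tail_payoff_le_aug_value)

lemma opt_policy_reaches: "\<exists>t. v_RAA f l g x \<le> l (aug_state f l g opt_policy x t)"
proof -
  let ?xs = "aug_state f l g opt_policy x"
  define t0 where "t0 = reach_time x (l x) (g x)"
  define y0 where "y0 = (MAX k\<in>{..t0}. l (?xs k))"
  define z0 where "z0 = (MIN k\<in>{..t0}. g (?xs k))"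
  have "aug_traj f l g opt_policy x t0 = (?xs t0, y0, z0)"
    unfolding y0_def z0_def by (rule aug_traj_eq)
  from opt_policy_invariant[OF this]
  have "aug_value (?xs t0) y0 z0 = v_RAA f l g x" "reach_time (?xs t0) y0 z0 = 0"
    unfolding t0_def v_RAA_eq_aug_value by simp_all
  with reach_time_zero have "v_RAA f l g x \<le> y0"
    by metis
  moreover have "y0 \<in> (\<lambda>k. l (?xs k)) ` {..t0}"
    unfolding y0_def by (rule Max_in) auto
  ultimately show ?thesis by auto
qed

lemma opt_policy_avoids: "v_RAA f l g x \<le> g (aug_state f l g opt_policy x t)"
proof -
  let ?xs = "aug_state f l g opt_policy x"
  have "aug_traj f l g opt_policy x t =
      (?xs t, MAX k\<in>{..t}. l (?xs k), MIN k\<in>{..t}. g (?xs k))"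
    by (rule aug_traj_eq)
  from opt_policy_invariant[OF this] have "v_RAA f l g x \<le> (MIN k\<in>{..t}. g (?xs k))"
    using aug_value_le_z unfolding v_RAA_eq_aug_value by metis
  also have "\<dots> \<le> g (?xs t)"
    by (rule Min_le) auto
  finally show ?thesis .
qed

lemma raa_payoff_opt_policy: "raa_payoff l g (aug_state f l g opt_policy x) = v_RAA f l g x"
proof (rule antisym)
  show "raa_payoff l g (aug_state f l g opt_policy x) \<le> v_RAA f l g x"
    unfolding aug_state_eq_traj by (rule raa_payoff_traj_le_v_RAA)
next
  let ?xs = "aug_state f l g opt_policy x"
  obtain t where "v_RAA f l g x \<le> l (?xs t)"
    using opt_policy_reaches by blast
  also have "\<dots> \<le> (SUP t. l (?xs t))"
    by (rule cSUP_upper[OF UNIV_I bdd_above_finite[OF finite_range_comp]])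
  finally have "v_RAA f l g x \<le> (SUP t. l (?xs t))" .
  moreover have "v_RAA f l g x \<le> (INF t. g (?xs t))"
    by (rule cINF_greatest) (simp_all add: opt_policy_avoids)
  ultimately show "v_RAA f l g x \<le> raa_payoff l g ?xs"
    unfolding raa_payoff_def by simp
qed

end

theorem mainTheorem9:
  fixes f :: "'x::finite \<Rightarrow> 'u::finite \<Rightarrow> 'x"
    and l g :: "'x \<Rightarrow> real"
  shows "\<exists>pol :: 'x \<Rightarrow> real \<Rightarrow> real \<Rightarrow> 'u. \<forall>x.
           v_RAA f l g x
             = min (SUP tau. l (aug_state f l g pol x tau)) (INF tau. g (aug_state f l g pol x tau))"
proof (intro exI allI)
  fix x
  show "v_RAA f l g x = min (SUP tau. l (aug_state f l g (opt_policy f l g) x tau))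
      (INF tau. g (aug_state f l g (opt_policy f l g) x tau))"
    by (metis raa_payoff_def raa_payoff_opt_policy)
qed

end
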